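(* Let $d,r\ge1$ and consider a reaction network with species $S_1,\dots,S_{d+r}$ and reactions $y_k\to y'_k$ ($k=1,\dots,K$), where $y_k,y'_k\in\mathbb Z^{d+r}_{\ge 0}$ and $y_k\ne y'_k$. Put $\alpha_i=0$ for $i\le d$ and $\alpha_i=1$ for $i>d$. Fix $\kappa_k>0$, real $\beta_k$, $z^0_\ell\in\mathbb Z^d_{\ge0}$ and $z^0_h\in\mathbb R^r_{>0}$. Let $X^N$ be the continuous-time Markov chain on $\mathbb Z^{d+r}_{\ge0}$ which jumps from $x$ to $x+y'_k-y_k$ with intensity $N^{\beta_k}\kappa_k x^{(y_k)}$, started at $X^N_i(0)=N^{\alpha_i}z^0_i$, where $z^0=(z^0_\ell,z^0_h)$. Let $\theta_0=\max_k(\beta_k+y_k\cdot\alpha)$ and $\mathcal R_0=\{k:\beta_k+y_k\cdot\alpha=\theta_0\}$. Let $Z^N$ be the scaled process with $Z^N_i(t)=N^{-\alpha_i}X^N_i(N^{-\theta_0}t)$, and let $p^N(A,t)=P(Z^N(t)\in A)$. Let $\mathbb S_\ell\times\mathbb S_h$ be the state space of $Z^N$, with $\mathbb S_\ell\subseteq\mathbb Z^d_{\ge0}$ and $\mathbb S_h\subseteq\mathbb R^r_{\ge0}$. For $k\in\mathcal R_0$ and $z_h\in\mathbb R^r_{\ge0}$, put $$\lambda^N_{H,k}(z_h)=\prod_{i=1}^r z_{h,i}\Bigl(z_{h,i}-\tfrac1N\Bigr)\cdots\Bigl(z_{h,i}-\tfrac{y_{k,d+i}-1}{N}\Bigr)$$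 and $s_k=(z^0_h)^{q_H(y_k)}$. For $M>0$ define $S_M=S_{L,M}\times S_{H,M}$, where $$S_{L,M}=\{z_\ell\in\mathbb S_\ell:\|z_\ell\|_\infty\le M\},$$ $$S_{H,M}=\{z_h\in\mathbb S_h:|\lambda^N_{H,k}(z_h)-s_k|\le M/N\ \text{for all }k\in\mathcal R_0\}.$$ Let $\tau^N_m$ be the time of the $\lfloor m\rfloor$-th transition of $Z^N$. Then there exists a constant $c>0$ such that, for $M=N^\rho$ with arbitrary $\rho\in(0,1)$ and $N$ sufficiently large, $p^N(S_M^c,t)\le P(\tau^N_{cM}<t)$ for all $t$.
   Context: Notation: $n^{(k)}=n(n-1)\cdots(n-k+1)$ when $n\ge k$ and $n^{(k)}=0$ otherwise, with $x^{(y)}=\prod_i x_i^{(y_i)}$ and $u^v=\prod_i u_i^{v_i}$. The map $q_H$ keeps the last $r$ coordinates of a vector in $\mathbb Z^{d+r}$. The symbol $\lfloor m\rfloor$ denotes the floor of $m$. *)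

theory Defs
  imports "HOL-Probability.Probability"
begin

text \<open>A CTMC with finitely many transition types k < K, rate function rt x k and
jump map jmp x k is constructed pathwise from a sequence u of i.i.d. Uniform(0,1)
numbers: u (2n) selects the n-th transition (with probability proportional to its rate),
u (2n+1) gives the n-th holding time -ln(u)/total rate (exponential).\<close>

definition tot_rate :: "nat \<Rightarrow> ('s \<Rightarrow> nat \<Rightarrow> real) \<Rightarrow> 's \<Rightarrow> real" where
  "tot_rate K rt x = (\<Sum>k<K. rt x k)"

definition pick :: "nat \<Rightarrow> ('s \<Rightarrow> nat \<Rightarrow> real) \<Rightarrow> 's \<Rightarrow> real \<Rightarrow> nat" where
  "pick K rt x v = (LEAST k. k < K \<and> v * tot_rate K rt x < (\<Sum>j\<le>k. rt x j))"

fun jchain :: "nat \<Rightarrow> ('s \<Rightarrow> nat \<Rightarrow> real) \<Rightarrow> ('s \<Rightarrow> nat \<Rightarrow> 's) \<Rightarrow> 's \<Rightarrow> (nat \<Rightarrow> real) \<Rightarrow> nat \<Rightarrow> 's" where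
  "jchain K rt jmp x0 u 0 = x0"
| "jchain K rt jmp x0 u (Suc n) =
     (let x = jchain K rt jmp x0 u n in
      if tot_rate K rt x = 0 then x else jmp x (pick K rt x (u (2 * n))))"

definition hold :: "nat \<Rightarrow> ('s \<Rightarrow> nat \<Rightarrow> real) \<Rightarrow> ('s \<Rightarrow> nat \<Rightarrow> 's) \<Rightarrow> 's \<Rightarrow> (nat \<Rightarrow> real) \<Rightarrow> nat \<Rightarrow> ereal" where
  "hold K rt jmp x0 u n =
     (let x = jchain K rt jmp x0 u n in
      if tot_rate K rt x = 0 then \<infinity> else ereal (- ln (u (2 * n + 1)) / tot_rate K rt x))"

text \<open>Time of the n-th transition (infinite if fewer than n transitions ever occur).\<close>
definition jtime :: "nat \<Rightarrow> ('s \<Rightarrow> nat \<Rightarrow> real) \<Rightarrow> ('s \<Rightarrow> nat \<Rightarrow> 's) \<Rightarrow> 's \<Rightarrow> (nat \<Rightarrow> real) \<Rightarrow> nat \<Rightarrow> ereal" where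
  "jtime K rt jmp x0 u n = (\<Sum>j<n. hold K rt jmp x0 u j)"

text \<open>State at time s; None if the chain has exploded by time s.\<close>
definition cstate :: "nat \<Rightarrow> ('s \<Rightarrow> nat \<Rightarrow> real) \<Rightarrow> ('s \<Rightarrow> nat \<Rightarrow> 's) \<Rightarrow> 's \<Rightarrow> (nat \<Rightarrow> real) \<Rightarrow> real \<Rightarrow> 's option" where
  "cstate K rt jmp x0 u s =
     (if \<exists>n. ereal s < jtime K rt jmp x0 u (Suc n)
      then Some (jchain K rt jmp x0 u (LEAST n. ereal s < jtime K rt jmp x0 u (Suc n)))
      else None)"

definition ffact_nat :: "nat \<Rightarrow> nat \<Rightarrow> real" where
  "ffact_nat n k = (\<Prod>j<k. real n - real j)"

text \<open>Intensity of reaction k in state x (species indexed 0..<d+r):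
  N^beta_k * kappa_k * x^(y_k).\<close>
definition rn_rate :: "nat \<Rightarrow> (nat \<Rightarrow> nat \<Rightarrow> nat) \<Rightarrow> (nat \<Rightarrow> real) \<Rightarrow> (nat \<Rightarrow> real) \<Rightarrow> nat
    \<Rightarrow> (nat \<Rightarrow> nat) \<Rightarrow> nat \<Rightarrow> real" where
  "rn_rate n y \<kappa> \<beta> N x k = real N powr \<beta> k * \<kappa> k * (\<Prod>i<n. ffact_nat (x i) (y k i))"

definition rn_jump :: "(nat \<Rightarrow> nat \<Rightarrow> nat) \<Rightarrow> (nat \<Rightarrow> nat \<Rightarrow> nat) \<Rightarrow> (nat \<Rightarrow> nat) \<Rightarrow> nat \<Rightarrow> (nat \<Rightarrow> nat)" where
  "rn_jump y y' x k = (\<lambda>i. x i + y' k i - y k i)"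

text \<open>theta_0 = max_k (beta_k + y_k . alpha), alpha_i = 0 for i < d, 1 for d \<le> i < d+r.\<close>
definition theta0 :: "nat \<Rightarrow> nat \<Rightarrow> nat \<Rightarrow> (nat \<Rightarrow> nat \<Rightarrow> nat) \<Rightarrow> (nat \<Rightarrow> real) \<Rightarrow> real" where
  "theta0 d r K y \<beta> = Max ((\<lambda>k. \<beta> k + real (\<Sum>i\<in>{d..<d+r}. y k i)) ` {..<K})"

definition R0 :: "nat \<Rightarrow> nat \<Rightarrow> nat \<Rightarrow> (nat \<Rightarrow> nat \<Rightarrow> nat) \<Rightarrow> (nat \<Rightarrow> real) \<Rightarrow> nat set" where
  "R0 d r K y \<beta> = {k. k < K \<and> \<beta> k + real (\<Sum>i\<in>{d..<d+r}. y k i) = theta0 d r K y \<beta>}"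

definition init_state :: "nat \<Rightarrow> nat \<Rightarrow> (nat \<Rightarrow> nat) \<Rightarrow> (nat \<Rightarrow> real) \<Rightarrow> nat \<Rightarrow> (nat \<Rightarrow> nat)" where
  "init_state d r z0l z0h N =
     (\<lambda>i. if i < d then z0l i else if i < d + r then nat \<lfloor>real N * z0h (i - d)\<rfloor> else 0)"

definition lambdaH :: "nat \<Rightarrow> nat \<Rightarrow> (nat \<Rightarrow> nat \<Rightarrow> nat) \<Rightarrow> nat \<Rightarrow> (nat \<Rightarrow> real) \<Rightarrow> nat \<Rightarrow> real" where
  "lambdaH d r y N zh k = (\<Prod>i<r. \<Prod>j<y k (d + i). zh i - real j / real N)"

definition s_const :: "nat \<Rightarrow> nat \<Rightarrow> (nat \<Rightarrow> nat \<Rightarrow> nat) \<Rightarrow> (nat \<Rightarrow> real) \<Rightarrow> nat \<Rightarrow> real" where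
  "s_const d r y z0h k = (\<Prod>i<r. z0h i ^ y k (d + i))"

text \<open>Membership of the scaled state z = (x_l, x_h / N) (x the unscaled state) in S_M.\<close>
definition in_SM :: "nat \<Rightarrow> nat \<Rightarrow> nat \<Rightarrow> (nat \<Rightarrow> nat \<Rightarrow> nat) \<Rightarrow> (nat \<Rightarrow> real) \<Rightarrow> (nat \<Rightarrow> real)
    \<Rightarrow> nat \<Rightarrow> real \<Rightarrow> (nat \<Rightarrow> nat) \<Rightarrow> bool" where
  "in_SM d r K y \<beta> z0h N M x \<longleftrightarrow>
     (\<forall>i<d. real (x i) \<le> M) \<and>
     (\<forall>k\<in>R0 d r K y \<beta>.
        \<bar>lambdaH d r y N (\<lambda>i. real (x (d + i)) / real N) k - s_const d r y z0h k\<bar> \<le> M / real N)"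

end

theory Submission
  imports Defs
begin

(*
  The inequality holds pathwise, for every realisation of the uniforms. Every jump moves each coordinate by at most D, the largest stoichiometric
  coefficient. So after n jumps the low species are at most z0_l + n D, and the scaled high
  species are within (n D + 1)/N of z0_h; as lambda^N_{H,k} is a product of at most r D
  factors z_{h,i} - j/N, this gives |lambda^N_{H,k}(z_h) - s_k| <= L (n D + 1 + D)/N.
  Both bounds are affine in n, so for c small and M = N^rho large the first c M + 1 states
  of the jump chain lie in S_M. Hence if Z^N(t) is outside S_M, or the chain has exploded
  by then, more than c M transitions have occurred before time t, i.e. tau^N_{cM} < t.
*)

text \<open>The state space is arbitrary, so the n-th state of the jump chain is measured in the
  countable set of states reachable in n jumps.\<close>

fun reachable :: "('s \<Rightarrow> nat \<Rightarrow> 's) \<Rightarrow> 's \<Rightarrow> nat \<Rightarrow> 's set" where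
  "reachable jmp x0 0 = {x0}"
| "reachable jmp x0 (Suc n) = reachable jmp x0 n \<union> (\<Union>x\<in>reachable jmp x0 n. range (jmp x))"

lemma countable_reachable: "countable (reachable jmp x0 n)"
  by (induction n) auto

lemma measurable_jchain:
  assumes U: "\<And>n. U n \<in> borel_measurable M"
  shows "(\<lambda>\<omega>. jchain K rt jmp x0 (\<lambda>n. U n \<omega>) n) \<in> measurable M (count_space (reachable jmp x0 n))"
proof (induction n)
  case 0
  then show ?case by simp
next
  case (Suc n)
  have step: "(\<lambda>\<omega>. if tot_rate K rt x = 0 then x else jmp x (pick K rt x (U (2 * n) \<omega>)))
      \<in> measurable M (count_space (reachable jmp x0 (Suc n)))"
    if x: "x \<in> reachable jmp x0 n" for x
  proof -
    have "(\<lambda>\<omega>. pick K rt x (U (2 * n) \<omega>)) \<in> measurable M (count_space UNIV)"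
      unfolding pick_def using U by measurable
    moreover have "jmp x \<in> measurable (count_space UNIV) (count_space (reachable jmp x0 (Suc n)))"
      using x by auto
    ultimately have "(\<lambda>\<omega>. jmp x (pick K rt x (U (2 * n) \<omega>)))
        \<in> measurable M (count_space (reachable jmp x0 (Suc n)))"
      by (rule measurable_compose)
    then show ?thesis
      using x by simp
  qed
  show ?case
    unfolding jchain.simps(2) Let_def
    by (rule measurable_compose_countable'[OF step Suc countable_reachable])
qed

lemma borel_measurable_hold:
  assumes U: "\<And>n. U n \<in> borel_measurable M"
  shows "(\<lambda>\<omega>. hold K rt jmp x0 (\<lambda>n. U n \<omega>) n) \<in> borel_measurable M"
  unfolding hold_def Let_def
  by (rule measurable_compose_countable'[OF _ measurable_jchain[OF U] countable_reachable])
    (use U in measurable)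

lemma borel_measurable_jtime:
  assumes U: "\<And>n. U n \<in> borel_measurable M"
  shows "(\<lambda>\<omega>. jtime K rt jmp x0 (\<lambda>n. U n \<omega>) n) \<in> borel_measurable M"
  unfolding jtime_def by (intro borel_measurable_ereal_sum borel_measurable_hold[OF U])

lemma pick_less:
  assumes nn: "\<forall>k<K. 0 \<le> rt x k" and tot: "tot_rate K rt x \<noteq> 0" and v: "0 < v" "v < 1"
  shows "pick K rt x v < K"
proof -
  have "tot_rate K rt x > 0"
    using tot nn sum_nonneg[of "{..<K}" "rt x"] by (simp add: tot_rate_def)
  moreover have K: "K > 0"
    using tot by (cases K) (auto simp: tot_rate_def)
  moreover have "{..K - 1} = {..<K}"
    using K by auto
  ultimately have "K - 1 < K \<and> v * tot_rate K rt x < (\<Sum>j\<le>K - 1. rt x j)"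
    using v by (simp add: tot_rate_def)
  then show ?thesis
    unfolding pick_def by (rule LeastI2_ex[OF exI]) auto
qed

lemma jchain_Suc_cases:
  assumes nn: "\<forall>x. \<forall>k<K. 0 \<le> rt x k" and u: "0 < u (2 * n)" "u (2 * n) < 1"
  obtains "jchain K rt jmp x0 u (Suc n) = jchain K rt jmp x0 u n"
    | k where "k < K" "jchain K rt jmp x0 u (Suc n) = jmp (jchain K rt jmp x0 u n) k"
proof (cases "tot_rate K rt (jchain K rt jmp x0 u n) = 0")
  case True
  then show ?thesis
    using that(1) by simp
next
  case False
  then show ?thesis
    using that(2) pick_less[of K rt "jchain K rt jmp x0 u n", OF _ False u] nn
    by (simp add: Let_def)
qed

lemma hold_pos:
  assumes nn: "\<forall>x. \<forall>k<K. 0 \<le> rt x k" and u: "\<forall>n. 0 < u n \<and> u n < 1"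
  shows "0 < hold K rt jmp x0 u n"
proof -
  let ?x = "jchain K rt jmp x0 u n"
  have "0 \<le> tot_rate K rt ?x"
    using nn unfolding tot_rate_def by (intro sum_nonneg) auto
  moreover have "ln (u (2 * n + 1)) < 0"
    using u by (simp add: ln_less_zero)
  ultimately show ?thesis
    by (auto simp: hold_def Let_def divide_neg_pos)
qed

lemma jtime_mono:
  assumes "\<forall>x. \<forall>k<K. 0 \<le> rt x k" and "\<forall>n. 0 < u n \<and> u n < 1" and "m \<le> n"
  shows "jtime K rt jmp x0 u m \<le> jtime K rt jmp x0 u n"
  unfolding jtime_def
  by (rule sum_mono2) (use assms hold_pos[OF assms(1,2)] in \<open>auto intro: less_imp_le\<close>)

lemma jtime_nonneg:
  assumes "\<forall>x. \<forall>k<K. 0 \<le> rt x k" and "\<forall>n. 0 < u n \<and> u n < 1"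
  shows "0 \<le> jtime K rt jmp x0 u n"
  using jtime_mono[OF assms, of 0 n] by (simp add: jtime_def)

lemma jtime_less_if_jtime_Suc_le:
  assumes nn: "\<forall>x. \<forall>k<K. 0 \<le> rt x k" and u: "\<forall>n. 0 < u n \<and> u n < 1"
    and le: "jtime K rt jmp x0 u (Suc n) \<le> ereal s"
  shows "jtime K rt jmp x0 u n < ereal s"
proof -
  have "jtime K rt jmp x0 u (Suc n) = jtime K rt jmp x0 u n + hold K rt jmp x0 u n"
    by (simp add: jtime_def)
  with le jtime_nonneg[OF nn u, of jmp x0 n] hold_pos[OF nn u, of jmp x0 n] show ?thesis
    by (cases "jtime K rt jmp x0 u n"; cases "hold K rt jmp x0 u n") auto
qed

lemma jtime_less_if_cstate_leaves:
  assumes nn: "\<forall>x. \<forall>k<K. 0 \<le> rt x k" and u: "\<forall>n. 0 < u n \<and> u n < 1"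
    and stays: "\<forall>n\<le>m. Q (jchain K rt jmp x0 u n)"
    and leaves: "case cstate K rt jmp x0 u s of None \<Rightarrow> True | Some x \<Rightarrow> \<not> Q x"
  shows "jtime K rt jmp x0 u m < ereal s"
proof (cases "\<exists>n. ereal s < jtime K rt jmp x0 u (Suc n)")
  case True
  define n where "n = (LEAST n. ereal s < jtime K rt jmp x0 u (Suc n))"
  have "cstate K rt jmp x0 u s = Some (jchain K rt jmp x0 u n)"
    using True by (simp add: cstate_def n_def)
  then have "m < n"
    using stays leaves by (metis not_le option.simps(5))
  then have "\<not> ereal s < jtime K rt jmp x0 u (Suc (n - 1))"
    unfolding n_def by (intro not_less_Least) simp
  then have "jtime K rt jmp x0 u n \<le> ereal s"
    using \<open>m < n\<close> by simp
  moreover have "jtime K rt jmp x0 u (Suc m) \<le> jtime K rt jmp x0 u n"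
    using \<open>m < n\<close> by (intro jtime_mono[OF nn u]) simp
  ultimately show ?thesis
    by (intro jtime_less_if_jtime_Suc_le[OF nn u]) simp
next
  case False
  then show ?thesis
    by (intro jtime_less_if_jtime_Suc_le[OF nn u]) (simp add: not_less)
qed

lemma (in finite_measure) measure_cstate_leaves_le_jtime:
  assumes U: "\<And>n. U n \<in> borel_measurable M"
    and U_unit: "AE \<omega> in M. \<forall>n. 0 < U n \<omega> \<and> U n \<omega> < 1"
    and nn: "\<forall>x. \<forall>k<K. 0 \<le> rt x k"
    and stays: "\<And>u. \<forall>n. 0 < u n \<and> u n < 1 \<Longrightarrow> \<forall>n\<le>m. Q (jchain K rt jmp x0 u n)"
    and a: "0 < a" and t: "a * s = t"
  shows "measure M {\<omega> \<in> space M.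
           case cstate K rt jmp x0 (\<lambda>n. U n \<omega>) s of None \<Rightarrow> True | Some x \<Rightarrow> \<not> Q x}
       \<le> measure M {\<omega> \<in> space M. ereal a * jtime K rt jmp x0 (\<lambda>n. U n \<omega>) m < ereal t}"
proof (rule finite_measure_mono_AE)
  show "{\<omega> \<in> space M. ereal a * jtime K rt jmp x0 (\<lambda>n. U n \<omega>) m < ereal t} \<in> sets M"
    using borel_measurable_jtime[OF U] by measurable
  show "AE \<omega> in M. \<omega> \<in> {\<omega> \<in> space M.
           case cstate K rt jmp x0 (\<lambda>n. U n \<omega>) s of None \<Rightarrow> True | Some x \<Rightarrow> \<not> Q x}
       \<longrightarrow> \<omega> \<in> {\<omega> \<in> space M. ereal a * jtime K rt jmp x0 (\<lambda>n. U n \<omega>) m < ereal t}"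
    using U_unit
  proof eventually_elim
    case (elim \<omega>)
    show ?case
    proof
      assume "\<omega> \<in> {\<omega> \<in> space M.
           case cstate K rt jmp x0 (\<lambda>n. U n \<omega>) s of None \<Rightarrow> True | Some x \<Rightarrow> \<not> Q x}"
      then have "jtime K rt jmp x0 (\<lambda>n. U n \<omega>) m < ereal s"
        using jtime_less_if_cstate_leaves[OF nn elim stays[OF elim]] by simp
      then have "ereal a * jtime K rt jmp x0 (\<lambda>n. U n \<omega>) m < ereal t"
        using a t by (cases "jtime K rt jmp x0 (\<lambda>n. U n \<omega>) m") auto
      then show "\<omega> \<in> {\<omega> \<in> space M. ereal a * jtime K rt jmp x0 (\<lambda>n. U n \<omega>) m < ereal t}"
        using \<open>\<omega> \<in> _\<close> by simp
    qed
  qed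
qed

lemma jchain_coord_dist:
  fixes jmp :: "('i \<Rightarrow> nat) \<Rightarrow> nat \<Rightarrow> 'i \<Rightarrow> nat"
  assumes nn: "\<forall>x. \<forall>k<K. 0 \<le> rt x k" and u: "\<forall>n. 0 < u n \<and> u n < 1"
    and step: "\<forall>x. \<forall>k<K. \<bar>real (jmp x k i) - real (x i)\<bar> \<le> real D"
  shows "\<bar>real (jchain K rt jmp x0 u n i) - real (x0 i)\<bar> \<le> real n * real D"
proof (induction n)
  case 0
  then show ?case by simp
next
  case (Suc n)
  have "\<bar>real (jchain K rt jmp x0 u (Suc n) i) - real (jchain K rt jmp x0 u n i)\<bar> \<le> real D"
    using u step by (cases rule: jchain_Suc_cases[OF nn, of u n jmp x0]) auto
  with Suc.IH show ?case
    by (simp add: algebra_simps)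
qed

lemma rn_jump_coord_dist:
  "\<bar>real (rn_jump y y' x k i) - real (x i)\<bar> \<le> real (max (y k i) (y' k i))"
  by (simp add: rn_jump_def)

lemma ffact_nat_nonneg: "0 \<le> ffact_nat n k"
proof (cases "n < k")
  case True
  then show ?thesis
    unfolding ffact_nat_def by (subst prod_zero[of "{..<k}"]) (auto intro: bexI[of _ n])
next
  case False
  then show ?thesis
    unfolding ffact_nat_def by (intro prod_nonneg) auto
qed

lemma rn_rate_nonneg:
  assumes "\<forall>k<K. 0 \<le> \<kappa> k"
  shows "\<forall>x. \<forall>k<K. 0 \<le> rn_rate n y \<kappa> \<beta> N x k"
  using assms unfolding rn_rate_def by (auto intro!: mult_nonneg_nonneg prod_nonneg ffact_nat_nonneg)

lemma abs_prod_diff_le: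
  fixes f g :: "'a \<Rightarrow> real"
  assumes "\<And>a. a \<in> I \<Longrightarrow> \<bar>f a\<bar> \<le> B" and "\<And>a. a \<in> I \<Longrightarrow> \<bar>g a\<bar> \<le> B" and "1 \<le> B"
  shows "\<bar>(\<Prod>a\<in>I. f a) - (\<Prod>a\<in>I. g a)\<bar> \<le> B ^ card I * (\<Sum>a\<in>I. \<bar>f a - g a\<bar>)"
proof -
  have B: "0 < B"
    using assms(3) by simp
  have "\<bar>(\<Prod>a\<in>I. f a) - (\<Prod>a\<in>I. g a)\<bar>
      = B ^ card I * \<bar>(\<Prod>a\<in>I. f a / B) - (\<Prod>a\<in>I. g a / B)\<bar>"
    using B by (simp add: prod_dividef diff_divide_distrib[symmetric] abs_divide)
  also have "\<dots> \<le> B ^ card I * (\<Sum>a\<in>I. \<bar>f a / B - g a / B\<bar>)"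
    using assms B by (intro mult_left_mono norm_prod_diff[where 'a = real, unfolded real_norm_def])
      (auto simp: abs_divide)
  also have "\<dots> = B ^ card I * (\<Sum>a\<in>I. \<bar>f a - g a\<bar>) / B"
    using B by (simp add: diff_divide_distrib[symmetric] abs_divide sum_divide_distrib[symmetric])
  also have "\<dots> \<le> B ^ card I * (\<Sum>a\<in>I. \<bar>f a - g a\<bar>)"
    using assms(3) frac_le[of "B ^ card I * (\<Sum>a\<in>I. \<bar>f a - g a\<bar>)" _ 1 B] B
    by (simp add: sum_nonneg)
  finally show ?thesis .
qed

lemma lambdaH_s_const_dist:
  fixes zh z0h :: "nat \<Rightarrow> real"
  assumes close: "\<forall>i<r. \<bar>zh i - z0h i\<bar> + real D / real N \<le> e"
    and bounded: "\<forall>i<r. \<bar>z0h i\<bar> + e \<le> B" and B: "1 \<le> B" and e: "0 \<le> e"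
    and coef: "\<forall>i<r. y k (d + i) \<le> D"
  shows "\<bar>lambdaH d r y N zh k - s_const d r y z0h k\<bar> \<le> B ^ (r * D) * (real (r * D) * e)"
proof -
  define S where "S = Sigma {..<r} (\<lambda>i. {..<y k (d + i)})"
  have lambdaH: "lambdaH d r y N zh k = (\<Prod>p\<in>S. zh (fst p) - real (snd p) / real N)"
    unfolding lambdaH_def S_def by (subst prod.Sigma) (auto simp: split_beta)
  have "(\<Prod>p\<in>S. z0h (fst p)) = (\<Prod>i<r. \<Prod>j<y k (d + i). z0h i)"
    unfolding S_def by (subst prod.Sigma) (auto simp: split_beta)
  then have s_const: "s_const d r y z0h k = (\<Prod>p\<in>S. z0h (fst p))"
    by (simp add: s_const_def)
  have card: "card S \<le> r * D"
  proof -
    have "card S = (\<Sum>i<r. y k (d + i))"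
      unfolding S_def by (simp add: card_SigmaI)
    also have "\<dots> \<le> (\<Sum>i<r. D)"
      using coef by (intro sum_mono) auto
    finally show ?thesis by simp
  qed
  have factor_dist: "\<bar>zh (fst p) - real (snd p) / real N - z0h (fst p)\<bar> \<le> e"
    and factor_bound: "\<bar>z0h (fst p)\<bar> + e \<le> B" if "p \<in> S" for p
  proof -
    have i: "fst p < r" and "snd p < y k (d + fst p)"
      using that by (auto simp: S_def)
    then have "real (snd p) / real N \<le> real D / real N"
      using coef by (auto intro!: divide_right_mono)
    moreover have "0 \<le> real (snd p) / real N"
      by simp
    moreover note close[rule_format, OF i]
    ultimately show "\<bar>zh (fst p) - real (snd p) / real N - z0h (fst p)\<bar> \<le> e"
      by (smt (verit))
    show "\<bar>z0h (fst p)\<bar> + e \<le> B"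
      using bounded i by blast
  qed
  have "\<bar>lambdaH d r y N zh k - s_const d r y z0h k\<bar>
      \<le> B ^ card S * (\<Sum>p\<in>S. \<bar>zh (fst p) - real (snd p) / real N - z0h (fst p)\<bar>)"
    unfolding lambdaH s_const
  proof (rule abs_prod_diff_le[OF _ _ B])
    fix p assume "p \<in> S"
    with factor_dist[OF this] factor_bound[OF this] e
    show "\<bar>z0h (fst p)\<bar> \<le> B" and "\<bar>zh (fst p) - real (snd p) / real N\<bar> \<le> B"
      by (smt (verit))+
  qed
  also have "\<dots> \<le> B ^ card S * (\<Sum>p\<in>S. e)"
    using factor_dist B by (intro mult_left_mono sum_mono) auto
  also have "\<dots> \<le> B ^ (r * D) * (real (r * D) * e)"
    using B e card by (simp only: sum_constant) (intro mult_mono power_increasing; simp flip: of_nat_mult)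
  finally show ?thesis .
qed

lemma init_state_high_dist:
  assumes "i < r" and "0 \<le> z0h i"
  shows "\<bar>real (init_state d r z0l z0h N (d + i)) - real N * z0h i\<bar> \<le> 1"
proof -
  have "real (init_state d r z0l z0h N (d + i)) = of_int \<lfloor>real N * z0h i\<rfloor>"
    using assms by (simp add: init_state_def)
  then show ?thesis
    using of_int_floor_le[of "real N * z0h i"] real_of_int_floor_add_one_gt[of "real N * z0h i"]
    by linarith
qed

lemma stoichiometry_bounded:
  fixes y y' :: "nat \<Rightarrow> nat \<Rightarrow> nat"
  obtains D :: nat where "\<forall>k<K. \<forall>i<n. y k i \<le> D \<and> y' k i \<le> D"
proof -
  have "finite ((\<lambda>(k, i). y k i + y' k i) ` ({..<K} \<times> {..<n}))"
    by simp
  then obtain D where "\<forall>m \<in> (\<lambda>(k, i). y k i + y' k i) ` ({..<K} \<times> {..<n}). m \<le> D"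
    using finite_nat_set_iff_bounded_le by blast
  then show thesis
    by (intro that[of D]) force
qed

lemma rn_jchain_coord_dist:
  assumes \<kappa>: "\<forall>k<K. 0 \<le> \<kappa> k" and u: "\<forall>n. 0 < u n \<and> u n < 1"
    and D: "\<forall>k<K. \<forall>i<m. y k i \<le> D \<and> y' k i \<le> D" and i: "i < m"
  shows "\<bar>real (jchain K (rn_rate m y \<kappa> \<beta> N) (rn_jump y y') x0 u n i) - real (x0 i)\<bar>
    \<le> real n * real D"
proof (rule jchain_coord_dist[OF rn_rate_nonneg[OF \<kappa>] u])
  show "\<forall>x. \<forall>k<K. \<bar>real (rn_jump y y' x k i) - real (x i)\<bar> \<le> real D"
  proof (intro allI impI)
    fix x k assume "k < K"
    then have "real (max (y k i) (y' k i)) \<le> real D"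
      using D i by simp
    with rn_jump_coord_dist show "\<bar>real (rn_jump y y' x k i) - real (x i)\<bar> \<le> real D"
      by (rule order_trans)
  qed
qed

lemma rn_jchain_low_species_le:
  assumes \<kappa>: "\<forall>k<K. 0 \<le> \<kappa> k" and u: "\<forall>n. 0 < u n \<and> u n < 1"
    and D: "\<forall>k<K. \<forall>i<d+r. y k i \<le> D \<and> y' k i \<le> D" and i: "i < d"
  shows "real (jchain K (rn_rate (d+r) y \<kappa> \<beta> N) (rn_jump y y') (init_state d r z0l z0h N) u n i)
    \<le> real (z0l i) + real n * real D"
  using rn_jchain_coord_dist[OF \<kappa> u D, of i \<beta> N "init_state d r z0l z0h N" n] i
  by (simp add: init_state_def)

lemma rn_jchain_lambdaH_dist:
  fixes z0l :: "nat \<Rightarrow> nat" and \<beta> :: "nat \<Rightarrow> real"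
  assumes \<kappa>: "\<forall>k<K. 0 \<le> \<kappa> k" and u: "\<forall>n. 0 < u n \<and> u n < 1" and z0h: "\<forall>i<r. 0 \<le> z0h i"
    and D: "\<forall>k<K. \<forall>i<d+r. y k i \<le> D \<and> y' k i \<le> D"
    and N: "1 \<le> N" and n: "n \<le> N" and k: "k < K"
  defines "x \<equiv> jchain K (rn_rate (d+r) y \<kappa> \<beta> N) (rn_jump y y') (init_state d r z0l z0h N) u n"
  shows "\<bar>lambdaH d r y N (\<lambda>i. real (x (d + i)) / real N) k - s_const d r y z0h k\<bar>
    \<le> (1 + (\<Sum>i<r. z0h i) + 2 * real D) ^ (r * D) * real (r * D) * ((real n * D + 1 + D) / N)"
proof -
  define e where "e = (real n * D + 1 + D) / N"
  have N_pos: "0 < real N"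
    using N by simp
  have close: "\<bar>real (x (d + i)) / real N - z0h i\<bar> + real D / real N \<le> e" if i: "i < r" for i
  proof -
    have "\<bar>real (x (d + i)) - real (init_state d r z0l z0h N (d + i))\<bar> \<le> real n * real D"
      unfolding x_def by (rule rn_jchain_coord_dist[OF \<kappa> u D]) (use i in simp)
    moreover have "\<bar>real (init_state d r z0l z0h N (d + i)) - real N * z0h i\<bar> \<le> 1"
      using i z0h by (intro init_state_high_dist) auto
    ultimately have "\<bar>real (x (d + i)) - real N * z0h i\<bar> \<le> real n * real D + 1"
      by linarith
    then have "\<bar>real (x (d + i)) - real N * z0h i\<bar> / real N + real D / real N \<le> e"
      unfolding e_def using N_pos by (simp add: divide_right_mono add_divide_distrib[symmetric])
    moreover have "\<bar>real (x (d + i)) / real N - z0h i\<bar> = \<bar>real (x (d + i)) - real N * z0h i\<bar> / real N"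
      using N_pos by (simp add: field_simps)
    ultimately show ?thesis
      by simp
  qed
  have "e \<le> 2 * real D + 1"
  proof -
    have "real n * D \<le> real N * D" and "1 \<le> real N"
      using n N by (simp_all add: mult_right_mono)
    then have "real n * D + 1 + D \<le> real N * (2 * real D + 1)"
      using mult_right_mono[of 1 "real N" "real D"] by (simp add: algebra_simps)
    then show ?thesis
      unfolding e_def using N_pos by (simp add: divide_le_eq mult.commute)
  qed
  moreover have "z0h i \<le> (\<Sum>i<r. z0h i)" if "i < r" for i
    using z0h that by (intro member_le_sum) auto
  ultimately have bounded: "\<bar>z0h i\<bar> + e \<le> 1 + (\<Sum>i<r. z0h i) + 2 * real D" if "i < r" for i
    using z0h that by fastforce
  have "0 \<le> (\<Sum>i<r. z0h i)"
    using z0h by (intro sum_nonneg) auto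
  moreover have "0 \<le> e"
    unfolding e_def by simp
  moreover have "\<forall>i<r. y k (d + i) \<le> D"
    using D k by auto
  ultimately show ?thesis
    unfolding e_def[symmetric] mult.assoc
    by (intro lambdaH_s_const_dist) (use close bounded in auto)
qed

lemma small_rate_affine_le:
  fixes A B :: real
  assumes "0 \<le> A" and "0 \<le> B"
  obtains c where "0 < c" and "c \<le> 1" and "\<And>M x. 2 * A \<le> M \<Longrightarrow> x \<le> c * M \<Longrightarrow> A + B * x \<le> M"
proof
  define c where "c = 1 / (2 * (B + 1))"
  show "0 < c" and "c \<le> 1"
    using assms by (simp_all add: c_def field_simps)
  fix M x assume M: "2 * A \<le> M" and x: "x \<le> c * M"
  have "B * x \<le> B * (c * M)"
    using x assms by (intro mult_left_mono)
  also have "\<dots> = M * (B / (2 * (B + 1)))"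
    by (simp add: c_def)
  also have "\<dots> \<le> M * (1 / 2)"
    using M assms by (intro mult_left_mono) (simp_all add: field_simps)
  finally show "A + B * x \<le> M"
    using M by simp
qed

lemma rn_jchain_in_SM:
  fixes z0l :: "nat \<Rightarrow> nat" and z0h \<beta> :: "nat \<Rightarrow> real" and r D :: nat and L :: real
  defines "L \<equiv> (1 + (\<Sum>i<r. z0h i) + 2 * real D) ^ (r * D) * real (r * D)"
  assumes \<kappa>: "\<forall>k<K. 0 \<le> \<kappa> k" and u: "\<forall>n. 0 < u n \<and> u n < 1" and z0h: "\<forall>i<r. 0 \<le> z0h i"
    and D: "\<forall>k<K. \<forall>i<d+r. y k i \<le> D \<and> y' k i \<le> D"
    and N: "1 \<le> N" and n: "n \<le> N"
    and within: "(\<Sum>i<d. real (z0l i)) + L * (1 + D) + (1 + L) * D * n \<le> M"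
  shows "in_SM d r K y \<beta> z0h N M
    (jchain K (rn_rate (d+r) y \<kappa> \<beta> N) (rn_jump y y') (init_state d r z0l z0h N) u n)"
  (is "in_SM d r K y \<beta> z0h N M ?x")
  unfolding in_SM_def
proof (intro conjI allI impI ballI)
  have "0 \<le> (\<Sum>i<r. z0h i)"
    using z0h by (intro sum_nonneg) auto
  then have L: "0 \<le> L"
    unfolding L_def by simp
  fix i assume "i < d"
  then have "real (?x i) \<le> real (z0l i) + real n * D"
    and "real (z0l i) \<le> (\<Sum>i<d. real (z0l i))"
    by (intro rn_jchain_low_species_le[OF \<kappa> u D] member_le_sum; simp)+
  moreover have "real n * D \<le> (1 + L) * D * n" and "0 \<le> L * (1 + D)"
    using L by (simp_all add: algebra_simps)
  ultimately show "real (?x i) \<le> M"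
    using within by linarith
next
  fix k assume "k \<in> R0 d r K y \<beta>"
  then have "k < K"
    by (simp add: R0_def)
  have "\<bar>lambdaH d r y N (\<lambda>i. real (?x (d + i)) / real N) k - s_const d r y z0h k\<bar>
      \<le> L * ((real n * D + 1 + D) / N)"
    unfolding L_def by (rule rn_jchain_lambdaH_dist[OF \<kappa> u z0h D N n \<open>k < K\<close>])
  also have "\<dots> = (L * (1 + D) + L * D * n) / N"
    by (simp add: algebra_simps)
  also have "\<dots> \<le> M / N"
  proof (rule divide_right_mono)
    have "(1 + L) * D * n = L * D * n + D * n"
      by (simp add: algebra_simps)
    then show "L * (1 + D) + L * D * n \<le> M"
      using within sum_nonneg[of "{..<d}" "\<lambda>i. real (z0l i)"] mult_nonneg_nonneg[of "real D" "real n"]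
      by linarith
  qed simp
  finally show "\<bar>lambdaH d r y N (\<lambda>i. real (?x (d + i)) / real N) k - s_const d r y z0h k\<bar>
      \<le> M / real N" .
qed

lemma rn_jchain_stays_in_SM:
  fixes z0l :: "nat \<Rightarrow> nat" and \<beta> :: "nat \<Rightarrow> real"
  assumes \<kappa>: "\<forall>k<K. 0 \<le> \<kappa> k" and z0h: "\<forall>i<r. 0 \<le> z0h i"
  obtains c Q where "0 < c"
    and "\<And>N M u. Q \<le> M \<Longrightarrow> M \<le> real N \<Longrightarrow> \<forall>n. 0 < u n \<and> u n < 1 \<Longrightarrow>
      \<forall>n\<le>nat \<lfloor>c * M\<rfloor>. in_SM d r K y \<beta> z0h N M
        (jchain K (rn_rate (d+r) y \<kappa> \<beta> N) (rn_jump y y') (init_state d r z0l z0h N) u n)"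
proof -
  obtain D where D: "\<forall>k<K. \<forall>i<d+r. y k i \<le> D \<and> y' k i \<le> D"
    by (rule stoichiometry_bounded)
  define L where "L = (1 + (\<Sum>i<r. z0h i) + 2 * real D) ^ (r * D) * real (r * D)"
  define A where "A = (\<Sum>i<d. real (z0l i)) + L * (1 + D)"
  have "0 \<le> (\<Sum>i<r. z0h i)"
    using z0h by (intro sum_nonneg) auto
  then have L: "0 \<le> L"
    unfolding L_def by simp
  then have A: "0 \<le> A"
    unfolding A_def by (simp add: sum_nonneg)
  obtain c where c: "0 < c" "c \<le> 1"
    and budget: "\<And>M x. 2 * A \<le> M \<Longrightarrow> x \<le> c * M \<Longrightarrow> A + (1 + L) * D * x \<le> M"
    using small_rate_affine_le[OF A, of "(1 + L) * D"] L by auto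
  show thesis
  proof (rule that[OF c(1)], intro allI impI)
    fix N n :: nat and M :: real and u :: "nat \<Rightarrow> real"
    assume M: "2 * A + 1 \<le> M" "M \<le> real N" and u: "\<forall>n. 0 < u n \<and> u n < 1"
      and "n \<le> nat \<lfloor>c * M\<rfloor>"
    moreover have "real (nat \<lfloor>c * M\<rfloor>) \<le> c * M"
      using c M A by (intro of_nat_floor) simp
    ultimately have n: "real n \<le> c * M"
      by (meson of_nat_le_iff order_trans)
    moreover have "c * M \<le> M"
      using c M A by (simp add: mult_left_le_one_le)
    ultimately have "1 \<le> N" and "n \<le> N"
      using M A by linarith+
    with budget[OF _ n] M show "in_SM d r K y \<beta> z0h N M
        (jchain K (rn_rate (d+r) y \<kappa> \<beta> N) (rn_jump y y') (init_state d r z0l z0h N) u n)"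
      unfolding A_def L_def by (intro rn_jchain_in_SM[OF \<kappa> u z0h D]) (simp_all add: add.assoc)
  qed
qed

lemma eventually_le_real_powr_sequentially:
  fixes Q \<rho> :: real
  assumes "0 < \<rho>"
  shows "\<forall>\<^sub>F N in sequentially. Q \<le> real N powr \<rho>"
proof -
  have "\<forall>\<^sub>F N in sequentially. max 1 Q powr (1 / \<rho>) \<le> real N"
    using filterlim_real_sequentially by (simp add: filterlim_at_top)
  then show ?thesis
  proof eventually_elim
    case (elim N)
    have "Q \<le> (max 1 Q powr (1 / \<rho>)) powr \<rho>"
      using assms by (simp add: powr_powr)
    also have "\<dots> \<le> real N powr \<rho>"
      using elim assms by (intro powr_mono2) auto
    finally show ?case .
  qed
qed

lemma AE_uniform_unit_interval:
  fixes U :: "nat \<Rightarrow> 'a \<Rightarrow> real"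
  assumes "\<forall>n. U n \<in> borel_measurable P"
    and "\<forall>n. distr P borel (U n) = uniform_measure lborel {0<..<1::real}"
  shows "AE \<omega> in P. \<forall>n. 0 < U n \<omega> \<and> U n \<omega> < 1"
proof (subst AE_all_countable, intro allI)
  fix n
  have "AE v in uniform_measure lborel {0<..<1::real}. v \<in> {0<..<1}"
    by (intro AE_uniform_measureI) auto
  then have "AE v in distr P borel (U n). v \<in> {0<..<1}"
    unfolding assms(2)[rule_format] .
  then show "AE \<omega> in P. 0 < U n \<omega> \<and> U n \<omega> < 1"
    using assms(1) by (auto dest: AE_distrD)
qed

theorem lemma3p3:
  fixes d r K :: nat
    and y y' :: "nat \<Rightarrow> nat \<Rightarrow> nat"
    and \<kappa> \<beta> :: "nat \<Rightarrow> real"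
    and z0l :: "nat \<Rightarrow> nat" and z0h :: "nat \<Rightarrow> real"
    and P :: "'a measure" and U :: "nat \<Rightarrow> 'a \<Rightarrow> real"
  assumes "d \<ge> 1" and "r \<ge> 1" and "K \<ge> 1"
    and "\<forall>k<K. \<exists>i<d+r. y k i \<noteq> y' k i"
    and "\<forall>k<K. \<kappa> k > 0"
    and "\<forall>i<r. z0h i > 0"
    and "prob_space P"
    and "\<forall>n. U n \<in> borel_measurable P"
    and "prob_space.indep_vars P (\<lambda>_. borel) U UNIV"
    and "\<forall>n. distr P borel (U n) = uniform_measure lborel {0<..<1}"
  shows "\<exists>c>0. \<forall>\<rho>. 0 < \<rho> \<and> \<rho> < 1 \<longrightarrow>
    (\<exists>N0::nat. \<forall>N\<ge>N0. \<forall>t\<ge>0.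
      measure P {\<omega> \<in> space P.
        (case cstate K (rn_rate (d+r) y \<kappa> \<beta> N) (rn_jump y y') (init_state d r z0l z0h N)
                (\<lambda>n. U n \<omega>) (real N powr (- theta0 d r K y \<beta>) * t) of
           None \<Rightarrow> True
         | Some x \<Rightarrow> \<not> in_SM d r K y \<beta> z0h N (real N powr \<rho>) x)}
      \<le> measure P {\<omega> \<in> space P.
        ereal (real N powr theta0 d r K y \<beta>) *
          jtime K (rn_rate (d+r) y \<kappa> \<beta> N) (rn_jump y y') (init_state d r z0l z0h N)
                (\<lambda>n. U n \<omega>) (nat \<lfloor>c * real N powr \<rho>\<rfloor>) < ereal t})"
proof -
  interpret prob_space P
    by fact
  have \<kappa>: "\<forall>k<K. 0 \<le> \<kappa> k" and z0h: "\<forall>i<r. 0 \<le> z0h i"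
    using assms(5,6) by (simp_all add: less_imp_le)
  obtain c Q where c: "0 < c" and stays: "\<And>N M u. Q \<le> M \<Longrightarrow> M \<le> real N \<Longrightarrow>
      \<forall>n. 0 < u n \<and> u n < 1 \<Longrightarrow> \<forall>n\<le>nat \<lfloor>c * M\<rfloor>. in_SM d r K y \<beta> z0h N M
        (jchain K (rn_rate (d+r) y \<kappa> \<beta> N) (rn_jump y y') (init_state d r z0l z0h N) u n)"
    using rn_jchain_stays_in_SM[OF \<kappa> z0h] by blast
  have U_unit: "AE \<omega> in P. \<forall>n. 0 < U n \<omega> \<and> U n \<omega> < 1"
    using assms(8,10) by (rule AE_uniform_unit_interval)
  show ?thesis
  proof (intro exI[of _ c] conjI c allI impI, goal_cases)
    case \<rho>: (1 \<rho>)
    then obtain N0 where N0: "\<And>N. N0 \<le> N \<Longrightarrow> 1 \<le> N \<and> Q \<le> real N powr \<rho>"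
      using eventually_conj[OF eventually_ge_at_top[of 1] eventually_le_real_powr_sequentially[of \<rho> Q]]
      by (auto simp: eventually_sequentially)
    show ?case
    proof (intro exI[of _ N0] allI impI, goal_cases)
      case (1 N t)
      with N0 have N: "1 \<le> N" "Q \<le> real N powr \<rho>"
        by auto
      then have N_powr: "real N powr \<rho> \<le> real N"
        using powr_mono[of \<rho> 1 "real N"] \<rho> by simp
      show ?case
        by (rule measure_cstate_leaves_le_jtime[where Q = "in_SM d r K y \<beta> z0h N (real N powr \<rho>)",
              OF _ U_unit rn_rate_nonneg[OF \<kappa>] stays[OF N(2) N_powr]])
          (use assms(8) N in \<open>simp_all add: powr_minus\<close>)
    qed
  qed
qed

end
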